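(* Let $x_1<x_2$, $u_0\in C^4([x_1,x_2])$ and $u_1\in C^3([x_1,x_2])$. Consider the Tricomi equation $y\,u_{xx}+u_{yy}=0$ with the data $u(x,0)=u_0(x)$, $u_y(x,0)=u_1(x)$ for $x\in[x_1,x_2]$. Then there exists a constant $\bar\delta$ with $0<\bar\delta\le\sqrt[3]{\frac{9(x_2-x_1)^2}{16}}$ such that this boundary problem has a classical solution in the region \[ \overline D_{\bar\delta}=\Big\{(x,y):\ -\bar\delta\le y\le 0,\ x_1+\tfrac23(-y)^{3/2}\le x\le x_2-\tfrac23(-y)^{3/2}\Big\}. \] *)

theory Defs
  imports "HOL-Analysis.Analysis"
begin

fun Ck_on :: "nat \<Rightarrow> (real \<Rightarrow> real) \<Rightarrow> real set \<Rightarrow> bool" where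
  "Ck_on 0 f S = continuous_on S f"
| "Ck_on (Suc k) f S =
     (\<exists>f'. (\<forall>x\<in>S. (f has_real_derivative f' x) (at x within S)) \<and> Ck_on k f' S)"

definition tricomi_region :: "real \<Rightarrow> real \<Rightarrow> real \<Rightarrow> (real \<times> real) set" where
  "tricomi_region x1 x2 \<delta> =
     {(x, y). - \<delta> \<le> y \<and> y \<le> 0 \<and>
              x1 + 2/3 * (- y) powr (3/2) \<le> x \<and> x \<le> x2 - 2/3 * (- y) powr (3/2)}"

definition tricomi_classical_solution ::
  "real \<Rightarrow> real \<Rightarrow> (real \<Rightarrow> real) \<Rightarrow> (real \<Rightarrow> real) \<Rightarrow> (real \<times> real) set
     \<Rightarrow> (real \<times> real \<Rightarrow> real) \<Rightarrow> bool" where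
  "tricomi_classical_solution x1 x2 u0 u1 D u =
    (\<exists>ux uy uxx uxy uyx uyy.
       continuous_on D u \<and> continuous_on D ux \<and> continuous_on D uy \<and>
       continuous_on D uxx \<and> continuous_on D uxy \<and> continuous_on D uyx \<and> continuous_on D uyy \<and>
       (\<forall>p\<in>D. (u has_derivative (\<lambda>(h, k). ux p * h + uy p * k)) (at p within D)) \<and>
       (\<forall>p\<in>D. (ux has_derivative (\<lambda>(h, k). uxx p * h + uxy p * k)) (at p within D)) \<and>
       (\<forall>p\<in>D. (uy has_derivative (\<lambda>(h, k). uyx p * h + uyy p * k)) (at p within D)) \<and>
       (\<forall>p\<in>D. snd p * uxx p + uyy p = 0) \<and>
       (\<forall>x\<in>{x1..x2}. u (x, 0) = u0 x \<and> uy (x, 0) = u1 x))"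

end

(*
  The solution is given by an explicit formula. Put sigma(y) = 2/3 (-y)^(3/2), so that the
  characteristics through (x, y) meet the x-axis at x - sigma(y) and x + sigma(y), and for a weight
  w on [-pi/2, pi/2] consider the mean J(h, w)(x, t) = integral of h(x + t sin th) w(th) dth.
  After extending u0 and u1 to C^4 and C^3 functions on the whole line, the solution is the sum of
    v(x, y) = u0(x) + K * integral_0^sigma(y) tau J(u0'', cos^(4/3))(x, tau) dtau   (data u0 and 0),
    w(x, y) = c * y * J(u1, cos^(2/3))(x, sigma(y))                               (data 0 and u1),
  with 1/K = 4/3 * integral cos^(4/3) and 1/c = integral cos^(2/3). Differentiating under the
  integral sign, with sigma'(y) = -sqrt(-y) and sigma(y) sqrt(-y) = 2/3 y^2, the equation
  y u_xx + u_yy = 0 for v and for w reduces to identities between such means, which come from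
  integrating by parts in th. Both functions are C^2 on the whole closed half-plane y <= 0, hence
  on every region of the statement.
*)
theory Submission
  imports Defs
begin

section \<open>Extending \<open>C\<^sup>k\<close> functions from an interval to the line\<close>

lemma Ck_on_imp_continuous_on: "Ck_on k f S \<Longrightarrow> continuous_on S f"
proof (induction k arbitrary: f)
  case 0
  then show ?case by simp
next
  case (Suc k)
  then obtain f' where "\<forall>x\<in>S. (f has_real_derivative f' x) (at x within S)"
    by auto
  then show ?case
    by (meson DERIV_continuous continuous_on_eq_continuous_within)
qed

lemma exists_antiderivative_real:
  fixes g :: "real \<Rightarrow> real"
  assumes "continuous_on UNIV g"
  obtains G where "G a = v" "\<And>x. (G has_real_derivative g x) (at x)"
proof -
  obtain F where F: "\<And>x. (F has_real_derivative g x) (at x)"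
    using einterval_antiderivative[of "-\<infinity>" "\<infinity>" g] assms
    by (auto simp: continuous_on_eq_continuous_at has_real_derivative_iff_has_vector_derivative)
  show thesis
    by (rule that[of "\<lambda>x. F x + (v - F a)"]) (auto intro!: derivative_eq_intros F)
qed

lemma Ck_on_extend_interval:
  assumes "a < b" and "Ck_on k f {a..b}"
  shows "\<exists>F. Ck_on k F UNIV \<and> (\<forall>x\<in>{a..b}. F x = f x)"
  using assms(2)
proof (induction k arbitrary: f)
  case 0
  have "continuous_on UNIV (\<lambda>x. f (max a (min b x)))"
    by (rule continuous_on_compose2[of "{a..b}"]) (use 0 assms(1) in \<open>auto intro!: continuous_intros\<close>)
  then show ?case
    by auto
next
  case (Suc k)
  from Suc.prems obtain f' where f': "\<forall>x\<in>{a..b}. (f has_real_derivative f' x) (at x within {a..b})"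
    and f'_Ck: "Ck_on k f' {a..b}"
    by auto
  obtain F' where F': "Ck_on k F' UNIV" "\<forall>x\<in>{a..b}. F' x = f' x"
    using Suc.IH[OF f'_Ck] by blast
  obtain G where G: "G a = f a" "\<And>x. (G has_real_derivative F' x) (at x)"
    using exists_antiderivative_real[OF Ck_on_imp_continuous_on[OF F'(1)]] by blast
  have "\<exists>c. \<forall>x\<in>{a..b}. G x - f x = c"
  proof (rule has_field_derivative_zero_constant)
    fix x assume x: "x \<in> {a..b}"
    have "((\<lambda>x. G x - f x) has_real_derivative F' x - f' x) (at x within {a..b})"
      using G(2) f' x by (intro derivative_eq_intros) (auto intro: has_field_derivative_at_within)
    then show "((\<lambda>x. G x - f x) has_real_derivative 0) (at x within {a..b})"
      using F'(2) x by simp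
  qed simp
  then obtain c where c: "\<forall>x\<in>{a..b}. G x - f x = c"
    by blast
  moreover have "c = 0"
    using c G(1) assms(1) by force
  ultimately have "\<forall>x\<in>{a..b}. G x = f x"
    by simp
  moreover have "Ck_on (Suc k) G UNIV"
    using G(2) F'(1) by auto
  ultimately show ?case
    by blast
qed

section \<open>Weighted means along \<open>x + t sin \<theta>\<close>\<close>

lemma DERIV_integral_param:
  fixes f f' :: "real \<Rightarrow> real \<Rightarrow> real"
  assumes "\<And>s \<theta>. \<theta> \<in> {a..b} \<Longrightarrow> ((\<lambda>s. f s \<theta>) has_real_derivative f' s \<theta>) (at s)"
    and "continuous_on (UNIV \<times> {a..b}) (\<lambda>(s, \<theta>). f s \<theta>)"
    and "continuous_on (UNIV \<times> {a..b}) (\<lambda>(s, \<theta>). f' s \<theta>)"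
  shows "((\<lambda>s. integral {a..b} (f s)) has_real_derivative integral {a..b} (f' s)) (at s)"
proof -
  have "f s integrable_on {a..b}" for s
  proof (rule integrable_continuous_real)
    have "continuous_on {a..b} (\<lambda>\<theta>. (\<lambda>(s, \<theta>). f s \<theta>) (s, \<theta>))"
      by (rule continuous_on_compose2[OF assms(2)]) (auto intro!: continuous_intros)
    then show "continuous_on {a..b} (f s)"
      by simp
  qed
  then show ?thesis
    using leibniz_rule_field_derivative[of UNIV a b f f' s] assms by auto
qed

lemma continuous_on_compose_pair:
  assumes "continuous_on UNIV (\<lambda>p. g (fst p) (snd p))" "continuous_on S a" "continuous_on S b"
  shows "continuous_on S (\<lambda>z. g (a z) (b z))"
  using continuous_on_compose2[OF assms(1), of S "\<lambda>z. (a z, b z)"] assms(2,3)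
  by (auto intro: continuous_intros)

definition sin_mean :: "(real \<Rightarrow> real) \<Rightarrow> (real \<Rightarrow> real) \<Rightarrow> real \<Rightarrow> real \<Rightarrow> real" where
  "sin_mean h w x t = integral {-(pi/2)..pi/2} (\<lambda>\<theta>. h (x + t * sin \<theta>) * w \<theta>)"

lemma sin_mean_0 [simp]: "sin_mean h w x 0 = h x * integral {-(pi/2)..pi/2} w"
  by (simp add: sin_mean_def)

lemma continuous_on_sin_mean [continuous_intros]:
  assumes h: "continuous_on UNIV h" and w: "continuous_on {-(pi/2)..pi/2} w"
    and "continuous_on S a" "continuous_on S b"
  shows "continuous_on S (\<lambda>z. sin_mean h w (a z) (b z))"
proof -
  have "continuous_on (UNIV \<times> {-(pi/2)..pi/2}) (\<lambda>(p, \<theta>). h (fst p + snd p * sin \<theta>) * w \<theta>)"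
    by (auto simp: split_beta' intro!: continuous_intros continuous_on_compose2[OF h]
        continuous_on_compose2[OF w])
  from integral_continuous_on_param[OF this[unfolded box_real(2)[symmetric]]]
  have "continuous_on UNIV (\<lambda>p. sin_mean h w (fst p) (snd p))"
    by (simp add: sin_mean_def)
  then show ?thesis
    using assms(3,4) by (rule continuous_on_compose_pair)
qed

lemma DERIV_sin_mean_x:
  assumes h: "\<And>z. (h has_real_derivative h' z) (at z)" and h': "continuous_on UNIV h'"
    and w: "continuous_on {-(pi/2)..pi/2} w"
  shows "((\<lambda>x. sin_mean h w x t) has_real_derivative sin_mean h' w x t) (at x)"
  unfolding sin_mean_def
  by (rule DERIV_integral_param)
     (auto simp: split_beta' intro!: derivative_eq_intros DERIV_chain2[OF h] continuous_intros
       continuous_on_compose2[OF DERIV_continuous_on[OF h]]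
       continuous_on_compose2[OF h'] continuous_on_compose2[OF w])

lemma DERIV_sin_mean_t:
  assumes h: "\<And>z. (h has_real_derivative h' z) (at z)" and h': "continuous_on UNIV h'"
    and w: "continuous_on {-(pi/2)..pi/2} w"
  shows "((\<lambda>t. sin_mean h w x t) has_real_derivative sin_mean h' (\<lambda>\<theta>. sin \<theta> * w \<theta>) x t) (at t)"
  unfolding sin_mean_def
  by (rule DERIV_integral_param)
     (auto simp: split_beta' intro!: derivative_eq_intros DERIV_chain2[OF h] continuous_intros
       continuous_on_compose2[OF DERIV_continuous_on[OF h]]
       continuous_on_compose2[OF h'] continuous_on_compose2[OF w])

lemma sin_mean_scale_weight: "sin_mean h (\<lambda>\<theta>. c * w \<theta>) x t = c * sin_mean h w x t"
  by (simp add: sin_mean_def mult.left_commute[of _ c])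

lemma sin_mean_diff_weight:
  assumes h: "continuous_on UNIV h"
    and "continuous_on {-(pi/2)..pi/2} w1" "continuous_on {-(pi/2)..pi/2} w2"
  shows "sin_mean h (\<lambda>\<theta>. w1 \<theta> - w2 \<theta>) x t = sin_mean h w1 x t - sin_mean h w2 x t"
  unfolding sin_mean_def using assms
  by (subst integral_diff[symmetric])
     (auto simp: algebra_simps intro!: integrable_continuous_real continuous_intros continuous_on_compose2[OF h])

lemma sin_mean_cong_weight:
  "(\<And>\<theta>. \<theta> \<in> {-(pi/2)..pi/2} \<Longrightarrow> w1 \<theta> = w2 \<theta>) \<Longrightarrow> sin_mean h w1 x t = sin_mean h w2 x t"
  unfolding sin_mean_def by (intro integral_cong) auto

lemma has_integral_derivative_vanishing_ends:
  fixes \<phi> \<phi>' :: "real \<Rightarrow> real"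
  assumes "a \<le> b" "continuous_on {a..b} \<phi>" "\<phi> a = 0" "\<phi> b = 0"
    and "\<And>x. x \<in> {a<..<b} \<Longrightarrow> (\<phi> has_real_derivative \<phi>' x) (at x)"
  shows "(\<phi>' has_integral 0) {a..b}"
  using fundamental_theorem_of_calculus_interior[of a b \<phi> \<phi>'] assms
  by (simp add: has_real_derivative_iff_has_vector_derivative)

lemma sin_mean_by_parts:
  assumes h: "\<And>z. (h has_real_derivative h' z) (at z)" and h': "continuous_on UNIV h'"
    and a: "continuous_on {-(pi/2)..pi/2} a" "a (-(pi/2)) = 0" "a (pi/2) = 0"
    and a': "continuous_on {-(pi/2)..pi/2} a'"
      "\<And>\<theta>. \<theta> \<in> {-(pi/2)<..<pi/2} \<Longrightarrow> (a has_real_derivative a' \<theta>) (at \<theta>)"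
  shows "t * sin_mean h' (\<lambda>\<theta>. cos \<theta> * a \<theta>) x t + sin_mean h a' x t = 0"
proof -
  have hc: "continuous_on UNIV h"
    using h by (rule DERIV_continuous_on)
  let ?I = "{-(pi/2)..pi/2}"
  let ?f = "\<lambda>\<theta>. t * (h' (x + t * sin \<theta>) * (cos \<theta> * a \<theta>)) + h (x + t * sin \<theta>) * a' \<theta>"
  have "(?f has_integral 0) ?I"
  proof (rule has_integral_derivative_vanishing_ends)
    show "continuous_on ?I (\<lambda>\<theta>. h (x + t * sin \<theta>) * a \<theta>)"
      by (intro continuous_intros continuous_on_compose2[OF hc] a) auto
    show "((\<lambda>\<theta>. h (x + t * sin \<theta>) * a \<theta>) has_real_derivative ?f \<theta>) (at \<theta>)"
      if "\<theta> \<in> {-(pi/2)<..<pi/2}" for \<theta>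
      by (auto intro!: derivative_eq_intros DERIV_chain2[OF h] a'(2)[OF that] simp: algebra_simps)
  qed (use a in auto)
  moreover have "(?f has_integral t * sin_mean h' (\<lambda>\<theta>. cos \<theta> * a \<theta>) x t + sin_mean h a' x t) ?I"
    unfolding sin_mean_def
    by (intro has_integral_add has_integral_mult_right integrable_integral integrable_continuous_real
        continuous_intros continuous_on_compose2[OF hc] continuous_on_compose2[OF h'] a a') auto
  ultimately show ?thesis
    using has_integral_unique by blast
qed

lemma continuous_on_cos_powr:
  "0 < p \<Longrightarrow> continuous_on {-(pi/2)..pi/2} (\<lambda>\<theta>. cos \<theta> powr p)"
  by (rule continuous_on_powr') (auto intro!: continuous_intros cos_ge_zero)

lemma integral_cos_powr_pos:
  assumes "0 < p"
  shows "0 < integral {-(pi/2)..pi/2} (\<lambda>\<theta>. cos \<theta> powr p)"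
proof -
  have "integral (cbox (-(pi/2)) (pi/2)) (\<lambda>\<theta>. 0) < integral (cbox (-(pi/2)) (pi/2)) (\<lambda>\<theta>. cos \<theta> powr p)"
  proof (rule integral_less)
    show "continuous_on (cbox (-(pi/2)) (pi/2)) (\<lambda>\<theta>. cos \<theta> powr p)"
      using continuous_on_cos_powr[OF assms] by simp
    show "0 < cos \<theta> powr p" if "\<theta> \<in> box (-(pi/2)) (pi/2)" for \<theta>
      using that cos_gt_zero_pi[of \<theta>] by auto
    show "box (-(pi/2)) (pi/2) \<noteq> ({}::real set)"
      by (simp add: box_ne_empty not_le)
  qed (auto intro: continuous_intros)
  then show ?thesis
    by simp
qed

lemma cos_mult_cos_powr: "\<theta> \<in> {-(pi/2)..pi/2} \<Longrightarrow> cos \<theta> * cos \<theta> powr q = cos \<theta> powr (q + 1)"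
  by (simp add: powr_mult_base cos_ge_zero add.commute)

lemma sin_mean_sin_cos_powr:
  assumes h: "\<And>z. (h has_real_derivative h' z) (at z)" and h': "continuous_on UNIV h'"
    and p: "0 < p"
  shows "(p + 1) * sin_mean h (\<lambda>\<theta>. sin \<theta> * cos \<theta> powr p) x t
       = t * sin_mean h' (\<lambda>\<theta>. cos \<theta> powr (p + 2)) x t"
proof -
  have "t * sin_mean h' (\<lambda>\<theta>. cos \<theta> * cos \<theta> powr (p + 1)) x t
      + sin_mean h (\<lambda>\<theta>. - (p + 1) * (sin \<theta> * cos \<theta> powr p)) x t = 0"
  proof (rule sin_mean_by_parts[OF h h'])
    show "((\<lambda>\<theta>. cos \<theta> powr (p + 1)) has_real_derivative - (p + 1) * (sin \<theta> * cos \<theta> powr p)) (at \<theta>)"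
      if "\<theta> \<in> {-(pi/2)<..<pi/2}" for \<theta>
      using that cos_gt_zero_pi[of \<theta>] by (auto intro!: derivative_eq_intros simp: algebra_simps)
  qed (use p in \<open>auto intro!: continuous_intros continuous_on_cos_powr\<close>)
  moreover have "sin_mean h' (\<lambda>\<theta>. cos \<theta> * cos \<theta> powr (p + 1)) x t = sin_mean h' (\<lambda>\<theta>. cos \<theta> powr (p + 2)) x t"
    by (rule sin_mean_cong_weight) (simp add: cos_mult_cos_powr add.commute)
  ultimately show ?thesis
    unfolding sin_mean_scale_weight by (simp add: algebra_simps)
qed

lemma sin_mean_cos_powr_recurrence:
  assumes h: "\<And>z. (h has_real_derivative h' z) (at z)" and h': "continuous_on UNIV h'"
    and p: "0 < p"
  shows "t * sin_mean h' (\<lambda>\<theta>. sin \<theta> * cos \<theta> powr (p + 2)) x t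
       = (p + 1) * sin_mean h (\<lambda>\<theta>. cos \<theta> powr p) x t - (p + 2) * sin_mean h (\<lambda>\<theta>. cos \<theta> powr (p + 2)) x t"
proof -
  have hc: "continuous_on UNIV h"
    using h by (rule DERIV_continuous_on)
  let ?a' = "\<lambda>\<theta>. (p + 2) * cos \<theta> powr (p + 2) - (p + 1) * cos \<theta> powr p"
  have "t * sin_mean h' (\<lambda>\<theta>. cos \<theta> * (sin \<theta> * cos \<theta> powr (p + 1))) x t + sin_mean h ?a' x t = 0"
  proof (rule sin_mean_by_parts[OF h h'])
    show "((\<lambda>\<theta>. sin \<theta> * cos \<theta> powr (p + 1)) has_real_derivative ?a' \<theta>) (at \<theta>)"
      if "\<theta> \<in> {-(pi/2)<..<pi/2}" for \<theta>
    proof -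
      have cos: "cos \<theta> > 0"
        using that cos_gt_zero_pi[of \<theta>] by auto
      then have "((\<lambda>\<theta>. sin \<theta> * cos \<theta> powr (p + 1)) has_real_derivative
          cos \<theta> * cos \<theta> powr (p + 1) - (p + 1) * sin \<theta> * sin \<theta> * cos \<theta> powr p) (at \<theta>)"
        (is "(_ has_real_derivative ?D) _")
        by (auto intro!: derivative_eq_intros simp: algebra_simps)
      moreover have "?D = ?a' \<theta>"
      proof -
        have "cos \<theta> powr (p + 1) = cos \<theta> powr p * cos \<theta>"
          "cos \<theta> powr (p + 2) = cos \<theta> powr p * cos \<theta> * cos \<theta>"
          using cos by (simp_all add: powr_add flip: power2_eq_square)
        then show ?thesis
          using sin_cos_squared_add[of \<theta>] by algebra
      qed
      ultimately show ?thesis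
        by simp
    qed
  qed (use p in \<open>auto intro!: continuous_intros continuous_on_cos_powr\<close>)
  moreover have "sin_mean h' (\<lambda>\<theta>. cos \<theta> * (sin \<theta> * cos \<theta> powr (p + 1))) x t
      = sin_mean h' (\<lambda>\<theta>. sin \<theta> * cos \<theta> powr (p + 2)) x t"
    by (rule sin_mean_cong_weight) (simp add: cos_mult_cos_powr mult.left_commute[of "cos _"] add.commute)
  moreover have "sin_mean h ?a' x t
      = (p + 2) * sin_mean h (\<lambda>\<theta>. cos \<theta> powr (p + 2)) x t - (p + 1) * sin_mean h (\<lambda>\<theta>. cos \<theta> powr p) x t"
    using p by (simp add: sin_mean_diff_weight[OF hc] sin_mean_scale_weight continuous_intros continuous_on_cos_powr)
  ultimately show ?thesis
    by (simp add: algebra_simps)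
qed

section \<open>First moments\<close>

text \<open>\<open>moment g t = \<integral>\<^sub>0\<^sup>t \<tau> g(\<tau>) d\<tau>\<close>, rescaled to the fixed interval \<open>[0, 1]\<close> so that it
  is defined for every sign of \<open>t\<close> and the interval of integration does not depend on \<open>t\<close>.\<close>
definition moment :: "(real \<Rightarrow> real) \<Rightarrow> real \<Rightarrow> real" where
  "moment g t = integral {0..1} (\<lambda>r. t^2 * r * g (t * r))"

lemma moment_0 [simp]: "moment g 0 = 0"
  by (simp add: moment_def)

lemma DERIV_moment:
  assumes g: "continuous_on UNIV g"
  shows "(moment g has_real_derivative t * g t) (at t)"
proof -
  have "continuous_on UNIV (\<lambda>\<tau>. \<tau> * g \<tau>)"
    using g by (intro continuous_intros)
  then obtain G where G: "G 0 = 0" "\<And>\<tau>. (G has_real_derivative \<tau> * g \<tau>) (at \<tau>)"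
    using exists_antiderivative_real[where a = 0 and v = 0] by blast
  have "moment g = G"
  proof
    fix s
    have "((\<lambda>r. s^2 * r * g (s * r)) has_integral G (s * 1) - G (s * 0)) {0..1}"
    proof (rule fundamental_theorem_of_calculus)
      fix r :: real
      have "((\<lambda>r. G (s * r)) has_real_derivative (s * r) * g (s * r) * s) (at r)"
        by (intro DERIV_chain2[OF G(2)] derivative_eq_intros) auto
      then have "((\<lambda>r. G (s * r)) has_real_derivative s^2 * r * g (s * r)) (at r)"
        by (simp add: power2_eq_square mult_ac)
      then show "((\<lambda>r. G (s * r)) has_vector_derivative s^2 * r * g (s * r)) (at r within {0..1})"
        by (simp add: has_real_derivative_iff_has_vector_derivative has_vector_derivative_at_within)
    qed simp
    then show "moment g s = G s"
      using G(1) by (simp add: moment_def integral_unique)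
  qed
  then show ?thesis
    using G(2) by simp
qed

lemma continuous_on_moment [continuous_intros]:
  assumes g: "continuous_on UNIV (\<lambda>p. g (fst p) (snd p))"
    and "continuous_on S a" "continuous_on S b"
  shows "continuous_on S (\<lambda>z. moment (g (a z)) (b z))"
proof -
  have "continuous_on (UNIV \<times> {0..1}) (\<lambda>(p, r). (snd p)^2 * r * g (fst p) (snd p * r))"
    by (auto simp: split_beta' intro!: continuous_intros continuous_on_compose_pair[OF g])
  from integral_continuous_on_param[OF this[unfolded box_real(2)[symmetric]]]
  have "continuous_on UNIV (\<lambda>p. moment (g (fst p)) (snd p))"
    by (simp add: moment_def)
  then show ?thesis
    using assms(2,3) by (rule continuous_on_compose_pair)
qed

lemma DERIV_moment_param:
  assumes "\<And>x t. ((\<lambda>x. g x t) has_real_derivative g' x t) (at x)"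
    and g: "continuous_on UNIV (\<lambda>p. g (fst p) (snd p))"
    and g': "continuous_on UNIV (\<lambda>p. g' (fst p) (snd p))"
  shows "((\<lambda>x. moment (g x) t) has_real_derivative moment (g' x) t) (at x)"
  unfolding moment_def
  using assms(1)
  by (intro DERIV_integral_param)
     (auto simp: split_beta' intro!: derivative_eq_intros continuous_intros
       continuous_on_compose_pair[OF g] continuous_on_compose_pair[OF g'])

lemma moment_sin_mean_cos_powr:
  assumes h: "\<And>z. (h has_real_derivative h' z) (at z)"
    and h': "\<And>z. (h' has_real_derivative h'' z) (at z)" and h'': "continuous_on UNIV h''"
    and p: "0 < p"
  shows "p * integral {-(pi/2)..pi/2} (\<lambda>\<theta>. cos \<theta> powr p) * h x
           + moment (sin_mean h'' (\<lambda>\<theta>. cos \<theta> powr p) x) t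
         = p * sin_mean h (\<lambda>\<theta>. cos \<theta> powr p) x t + t * sin_mean h' (\<lambda>\<theta>. sin \<theta> * cos \<theta> powr p) x t"
proof -
  let ?w = "\<lambda>\<theta>. cos \<theta> powr p" and ?I = "{-(pi/2)..pi/2}"
  have hc': "continuous_on UNIV h'"
    using h' by (rule DERIV_continuous_on)
  have w: "continuous_on ?I ?w"
    using p by (rule continuous_on_cos_powr)
  define \<Delta> where "\<Delta> s = p * integral ?I ?w * h x + moment (sin_mean h'' ?w x) s
      - p * sin_mean h ?w x s - s * sin_mean h' (\<lambda>\<theta>. sin \<theta> * ?w \<theta>) x s" for s
  have "(\<Delta> has_real_derivative 0) (at s)" for s
  proof -
    have "(\<Delta> has_real_derivative s * sin_mean h'' ?w x s - p * sin_mean h' (\<lambda>\<theta>. sin \<theta> * ?w \<theta>) x s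
        - (sin_mean h' (\<lambda>\<theta>. sin \<theta> * ?w \<theta>) x s + s * sin_mean h'' (\<lambda>\<theta>. sin \<theta> * (sin \<theta> * ?w \<theta>)) x s)) (at s)"
      unfolding \<Delta>_def using h'' w
      by (auto intro!: derivative_eq_intros DERIV_moment DERIV_sin_mean_t[OF h hc']
          DERIV_sin_mean_t[OF h' h''] continuous_intros)
    moreover have "sin_mean h'' ?w x s - sin_mean h'' (\<lambda>\<theta>. sin \<theta> * (sin \<theta> * ?w \<theta>)) x s
        = sin_mean h'' (\<lambda>\<theta>. cos \<theta> powr (p + 2)) x s"
    proof -
      have "cos \<theta> powr p - sin \<theta> * (sin \<theta> * cos \<theta> powr p) = cos \<theta> powr (p + 2)"
        if "\<theta> \<in> ?I" for \<theta>
      proof -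
        have "cos \<theta> powr p - sin \<theta> * (sin \<theta> * cos \<theta> powr p) = cos \<theta> * (cos \<theta> * cos \<theta> powr p)"
          using sin_cos_squared_add[of \<theta>] by algebra
        then show ?thesis
          using that by (simp add: cos_mult_cos_powr add.assoc)
      qed
      then have "sin_mean h'' (\<lambda>\<theta>. ?w \<theta> - sin \<theta> * (sin \<theta> * ?w \<theta>)) x s
          = sin_mean h'' (\<lambda>\<theta>. cos \<theta> powr (p + 2)) x s"
        by (rule sin_mean_cong_weight)
      then show ?thesis
        using h'' w by (subst (asm) sin_mean_diff_weight) (auto intro!: continuous_intros)
    qed
    moreover have "(p + 1) * sin_mean h' (\<lambda>\<theta>. sin \<theta> * ?w \<theta>) x s = s * sin_mean h'' (\<lambda>\<theta>. cos \<theta> powr (p + 2)) x s"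
      by (rule sin_mean_sin_cos_powr[OF h' h'' p])
    ultimately show ?thesis
      by (simp add: algebra_simps)
  qed
  then have "\<Delta> t = \<Delta> 0"
    by (blast intro: DERIV_isconst_all)
  then show ?thesis
    by (simp add: \<Delta>_def)
qed

section \<open>The characteristic variable\<close>

definition tricomi_sigma :: "real \<Rightarrow> real" where
  "tricomi_sigma y = 2/3 * (-y) * sqrt (-y)"

lemma tricomi_sigma_0 [simp]: "tricomi_sigma 0 = 0"
  by (simp add: tricomi_sigma_def)

lemma continuous_on_tricomi_sigma [continuous_intros]:
  "continuous_on S f \<Longrightarrow> continuous_on S (\<lambda>z. tricomi_sigma (f z))"
  unfolding tricomi_sigma_def by (intro continuous_intros)

lemma tricomi_sigma_mult_sqrt: "y \<le> 0 \<Longrightarrow> tricomi_sigma y * sqrt (-y) = 2/3 * y^2"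
  by (simp add: tricomi_sigma_def power2_eq_square)

lemma DERIV_tricomi_sigma:
  assumes "y \<le> 0"
  shows "(tricomi_sigma has_real_derivative - sqrt (-y)) (at y within {..0})"
proof (cases "y = 0")
  case True
  have "((\<lambda>z. - (2/3) * sqrt (-z)) \<longlongrightarrow> 0) (at 0 within {..0})"
    by (auto intro!: tendsto_eq_intros)
  moreover have "\<forall>\<^sub>F z in at 0 within {..0}. - (2/3) * sqrt (-z) = (tricomi_sigma z - tricomi_sigma 0) / (z - 0)"
    by (auto simp: eventually_at_filter tricomi_sigma_def)
  ultimately show ?thesis
    using True by (auto simp: has_field_derivative_iff intro: Lim_transform_eventually)
next
  case False
  then have "y < 0"
    using assms by simp
  moreover have "inverse (sqrt (-y)) * y = - sqrt (-y)"
    using assms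
    by (metis minus_minus mult_minus_right real_div_sqrt divide_inverse_commute neg_0_le_iff_le)
  ultimately have "(tricomi_sigma has_real_derivative - sqrt (-y)) (at y)"
    unfolding tricomi_sigma_def by (auto intro!: derivative_eq_intros)
  then show ?thesis
    by (rule has_field_derivative_at_within)
qed

lemma DERIV_moment_tricomi_sigma:
  assumes "continuous_on UNIV g" "y \<le> 0"
  shows "((\<lambda>y. moment g (tricomi_sigma y)) has_real_derivative - 2/3 * y^2 * g (tricomi_sigma y))
           (at y within {..0})"
proof -
  have "((\<lambda>y. moment g (tricomi_sigma y)) has_real_derivative
      tricomi_sigma y * g (tricomi_sigma y) * - sqrt (-y)) (at y within {..0})"
    using assms by (intro DERIV_chain2[OF DERIV_moment DERIV_tricomi_sigma])
  then show ?thesis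
    by (rule DERIV_cong) (use tricomi_sigma_mult_sqrt[OF assms(2)] in algebra)
qed

lemma DERIV_sin_mean_tricomi_sigma:
  assumes "\<And>z. (h has_real_derivative h' z) (at z)" "continuous_on UNIV h'"
    and "continuous_on {-(pi/2)..pi/2} w" "y \<le> 0"
  shows "((\<lambda>y. sin_mean h w x (tricomi_sigma y)) has_real_derivative
           sin_mean h' (\<lambda>\<theta>. sin \<theta> * w \<theta>) x (tricomi_sigma y) * - sqrt (-y)) (at y within {..0})"
  using assms by (intro DERIV_chain2[OF DERIV_sin_mean_t DERIV_tricomi_sigma])

text \<open>Integration by parts in \<open>\<theta>\<close> trades the factor \<open>sqrt (-y)\<close> of \<open>tricomi_sigma'\<close>, which is
  not differentiable at \<open>0\<close>, for a power of \<open>y\<close>; so this derivative can be differentiated again.\<close>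
lemma DERIV_mult_sin_mean_tricomi_sigma:
  assumes h: "\<And>z. (h has_real_derivative h' z) (at z)"
    and h': "\<And>z. (h' has_real_derivative h'' z) (at z)" and h'': "continuous_on UNIV h''"
    and y: "y \<le> 0"
  shows "((\<lambda>y. y * sin_mean h (\<lambda>\<theta>. cos \<theta> powr (2/3)) x (tricomi_sigma y)) has_real_derivative
           sin_mean h (\<lambda>\<theta>. cos \<theta> powr (2/3)) x (tricomi_sigma y)
           - 2/5 * y^3 * sin_mean h'' (\<lambda>\<theta>. cos \<theta> powr (8/3)) x (tricomi_sigma y)) (at y within {..0})"
proof -
  let ?s = "tricomi_sigma y"
  have hc': "continuous_on UNIV h'"
    using h' by (rule DERIV_continuous_on)
  have "((\<lambda>y. y * sin_mean h (\<lambda>\<theta>. cos \<theta> powr (2/3)) x (tricomi_sigma y)) has_real_derivative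
      sin_mean h (\<lambda>\<theta>. cos \<theta> powr (2/3)) x ?s
      + y * (sin_mean h' (\<lambda>\<theta>. sin \<theta> * cos \<theta> powr (2/3)) x ?s * - sqrt (-y))) (at y within {..0})"
    using y by (auto intro!: derivative_eq_intros DERIV_sin_mean_tricomi_sigma[OF h hc'] continuous_on_cos_powr)
  moreover have "5/3 * sin_mean h' (\<lambda>\<theta>. sin \<theta> * cos \<theta> powr (2/3)) x ?s
      = ?s * sin_mean h'' (\<lambda>\<theta>. cos \<theta> powr (8/3)) x ?s"
    using sin_mean_sin_cos_powr[OF h' h'', of "2/3"] by simp
  ultimately show ?thesis
    by (elim DERIV_cong) (use tricomi_sigma_mult_sqrt[OF y] in algebra)
qed

section \<open>Classical solutions\<close>

lemma has_derivative_from_partials: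
  fixes f fx fy :: "real \<times> real \<Rightarrow> real"
  assumes fx: "\<And>x y. y \<in> T \<Longrightarrow> ((\<lambda>x. f (x, y)) has_real_derivative fx (x, y)) (at x)"
    and fy: "\<And>x y. y \<in> T \<Longrightarrow> ((\<lambda>y. f (x, y)) has_real_derivative fy (x, y)) (at y within T)"
    and fy_cont: "continuous_on (UNIV \<times> T) fy" and "convex T" and "p \<in> UNIV \<times> T"
  shows "(f has_derivative (\<lambda>(h, k). fx p * h + fy p * k)) (at p within UNIV \<times> T)"
proof -
  obtain x y where p: "p = (x, y)" and y: "y \<in> T"
    using assms(5) by auto
  have "continuous_on (UNIV \<times> T) (\<lambda>p. blinfun_mult_left (fy p))"
    using continuous_on_compose[OF fy_cont linear_continuous_on[OF bounded_linear_blinfun_mult_left]]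
    by (simp add: o_def)
  then have "continuous (at (x, y) within UNIV \<times> T) (\<lambda>(x, y). blinfun_mult_left (fy (x, y)))"
    using y by (simp add: split_beta' continuous_on_eq_continuous_within)
  moreover have "((\<lambda>y. f (x, y)) has_derivative blinfun_apply (blinfun_mult_left (fy (x, y)))) (at y within T)"
    if "y \<in> T" for x y
    using fy[OF that, of x] by (simp add: has_field_derivative_def mult_commute_abs)
  ultimately have "((\<lambda>(x, y). f (x, y)) has_derivative
      (\<lambda>(h, k). fx (x, y) * h + blinfun_apply (blinfun_mult_left (fy (x, y))) k)) (at (x, y) within UNIV \<times> T)"
    using fx[OF y, of x] y \<open>convex T\<close>
    by (intro has_derivative_partialsI) (auto simp: has_field_derivative_def)
  then show ?thesis
    using p by (simp add: split_beta' mult.commute)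
qed

lemma tricomi_classical_solutionI:
  fixes u ux uy uxx uxy uyy :: "real \<Rightarrow> real \<Rightarrow> real"
  assumes D: "D \<subseteq> UNIV \<times> {..0}"
    and cont: "continuous_on (UNIV \<times> {..0}) (\<lambda>p. u (fst p) (snd p))"
      "continuous_on (UNIV \<times> {..0}) (\<lambda>p. ux (fst p) (snd p))"
      "continuous_on (UNIV \<times> {..0}) (\<lambda>p. uy (fst p) (snd p))"
      "continuous_on (UNIV \<times> {..0}) (\<lambda>p. uxx (fst p) (snd p))"
      "continuous_on (UNIV \<times> {..0}) (\<lambda>p. uxy (fst p) (snd p))"
      "continuous_on (UNIV \<times> {..0}) (\<lambda>p. uyy (fst p) (snd p))"
    and dx: "\<And>x y. y \<le> 0 \<Longrightarrow> ((\<lambda>x. u x y) has_real_derivative ux x y) (at x)"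
      "\<And>x y. y \<le> 0 \<Longrightarrow> ((\<lambda>x. ux x y) has_real_derivative uxx x y) (at x)"
      "\<And>x y. y \<le> 0 \<Longrightarrow> ((\<lambda>x. uy x y) has_real_derivative uxy x y) (at x)"
    and dy: "\<And>x y. y \<le> 0 \<Longrightarrow> (u x has_real_derivative uy x y) (at y within {..0})"
      "\<And>x y. y \<le> 0 \<Longrightarrow> (ux x has_real_derivative uxy x y) (at y within {..0})"
      "\<And>x y. y \<le> 0 \<Longrightarrow> (uy x has_real_derivative uyy x y) (at y within {..0})"
    and pde: "\<And>x y. y \<le> 0 \<Longrightarrow> y * uxx x y + uyy x y = 0"
    and data: "\<And>x. x \<in> {x1..x2} \<Longrightarrow> u x 0 = u0 x \<and> uy x 0 = u1 x"
  shows "tricomi_classical_solution x1 x2 u0 u1 D (\<lambda>(x, y). u x y)"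
  unfolding tricomi_classical_solution_def
proof (rule exI[of _ "case_prod ux"], rule exI[of _ "case_prod uy"], rule exI[of _ "case_prod uxx"],
    rule exI[of _ "case_prod uxy"], rule exI[of _ "case_prod uxy"], rule exI[of _ "case_prod uyy"],
    intro conjI ballI)
  fix p assume "p \<in> D"
  then have p: "p \<in> UNIV \<times> {..0}"
    using D by auto
  have partial: "(case_prod f has_derivative (\<lambda>(h, k). case_prod fx p * h + case_prod fy p * k)) (at p within D)"
    if "\<And>x y. y \<le> 0 \<Longrightarrow> ((\<lambda>x. f x y) has_real_derivative fx x y) (at x)"
      "\<And>x y. y \<le> 0 \<Longrightarrow> (f x has_real_derivative fy x y) (at y within {..0})"
      "continuous_on (UNIV \<times> {..0}) (\<lambda>p. fy (fst p) (snd p))" for f fx fy :: "real \<Rightarrow> real \<Rightarrow> real"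
  proof (rule has_derivative_subset[OF _ D])
    show "(case_prod f has_derivative (\<lambda>(h, k). case_prod fx p * h + case_prod fy p * k))
        (at p within UNIV \<times> {..0})"
      using that p by (intro has_derivative_from_partials) (auto simp: convex_real_interval split_beta')
  qed
  show "(case_prod u has_derivative (\<lambda>(h, k). case_prod ux p * h + case_prod uy p * k)) (at p within D)"
    by (rule partial[OF dx(1) dy(1) cont(3)])
  show "(case_prod ux has_derivative (\<lambda>(h, k). case_prod uxx p * h + case_prod uxy p * k)) (at p within D)"
    by (rule partial[OF dx(2) dy(2) cont(5)])
  show "(case_prod uy has_derivative (\<lambda>(h, k). case_prod uxy p * h + case_prod uyy p * k)) (at p within D)"
    by (rule partial[OF dx(3) dy(3) cont(6)])
  show "snd p * case_prod uxx p + case_prod uyy p = 0"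
    using p pde[of "snd p" "fst p"] by (auto simp: split_beta')
qed (use cont continuous_on_subset[OF _ D] data in \<open>auto simp: split_beta'\<close>)

lemma tricomi_classical_solution_superposition:
  assumes "tricomi_classical_solution x1 x2 u0 u1 D u" "tricomi_classical_solution x1 x2 v0 v1 D v"
    and "\<And>x. x \<in> {x1..x2} \<Longrightarrow> w0 x = u0 x + v0 x \<and> w1 x = u1 x + v1 x"
  shows "tricomi_classical_solution x1 x2 w0 w1 D (\<lambda>p. u p + v p)"
proof -
  obtain ux uy uxx uxy uyx uyy where u:
    "continuous_on D u" "continuous_on D ux" "continuous_on D uy"
    "continuous_on D uxx" "continuous_on D uxy" "continuous_on D uyx" "continuous_on D uyy"
    "\<forall>p\<in>D. (u has_derivative (\<lambda>(h, k). ux p * h + uy p * k)) (at p within D)"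
    "\<forall>p\<in>D. (ux has_derivative (\<lambda>(h, k). uxx p * h + uxy p * k)) (at p within D)"
    "\<forall>p\<in>D. (uy has_derivative (\<lambda>(h, k). uyx p * h + uyy p * k)) (at p within D)"
    "\<forall>p\<in>D. snd p * uxx p + uyy p = 0" "\<forall>x\<in>{x1..x2}. u (x, 0) = u0 x \<and> uy (x, 0) = u1 x"
    using assms(1) unfolding tricomi_classical_solution_def by (elim exE conjE) (rule that; assumption+)
  obtain vx vy vxx vxy vyx vyy where v:
    "continuous_on D v" "continuous_on D vx" "continuous_on D vy"
    "continuous_on D vxx" "continuous_on D vxy" "continuous_on D vyx" "continuous_on D vyy"
    "\<forall>p\<in>D. (v has_derivative (\<lambda>(h, k). vx p * h + vy p * k)) (at p within D)"
    "\<forall>p\<in>D. (vx has_derivative (\<lambda>(h, k). vxx p * h + vxy p * k)) (at p within D)"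
    "\<forall>p\<in>D. (vy has_derivative (\<lambda>(h, k). vyx p * h + vyy p * k)) (at p within D)"
    "\<forall>p\<in>D. snd p * vxx p + vyy p = 0" "\<forall>x\<in>{x1..x2}. v (x, 0) = v0 x \<and> vy (x, 0) = v1 x"
    using assms(2) unfolding tricomi_classical_solution_def by (elim exE conjE) (rule that; assumption+)
  have add: "((\<lambda>p. f p + g p) has_derivative (\<lambda>(h, k). (fx p + gx p) * h + (fy p + gy p) * k)) (at p within D)"
    if "(f has_derivative (\<lambda>(h, k). fx p * h + fy p * k)) (at p within D)"
      "(g has_derivative (\<lambda>(h, k). gx p * h + gy p * k)) (at p within D)"
    for f g fx fy gx gy :: "real \<times> real \<Rightarrow> real" and p
    using has_derivative_add[OF that] by (rule has_derivative_eq_rhs) (auto simp: fun_eq_iff algebra_simps)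
  show ?thesis
    unfolding tricomi_classical_solution_def
  proof (intro exI conjI ballI)
    fix p assume p: "p \<in> D"
    show "((\<lambda>p. u p + v p) has_derivative (\<lambda>(h, k). (ux p + vx p) * h + (uy p + vy p) * k)) (at p within D)"
      using u(8) v(8) p by (intro add) auto
    show "((\<lambda>p. ux p + vx p) has_derivative (\<lambda>(h, k). (uxx p + vxx p) * h + (uxy p + vxy p) * k)) (at p within D)"
      using u(9) v(9) p by (intro add) auto
    show "((\<lambda>p. uy p + vy p) has_derivative (\<lambda>(h, k). (uyx p + vyx p) * h + (uyy p + vyy p) * k)) (at p within D)"
      using u(10) v(10) p by (intro add) auto
    show "snd p * (uxx p + vxx p) + (uyy p + vyy p) = 0"
      using bspec[OF u(11) p] bspec[OF v(11) p] by (simp only: distrib_left)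
  qed (use u v assms(3) in \<open>auto intro: continuous_intros\<close>)
qed

section \<open>The two half-problems\<close>

lemma tricomi_equation_zero_velocity:
  assumes h: "\<And>z. (h has_real_derivative h' z) (at z)"
    and h': "\<And>z. (h' has_real_derivative h'' z) (at z)" and h'': "continuous_on UNIV h''"
  shows "y * (4/3 * integral {-(pi/2)..pi/2} (\<lambda>\<theta>. cos \<theta> powr (4/3)) * h x
             + moment (sin_mean h'' (\<lambda>\<theta>. cos \<theta> powr (4/3)) x) (tricomi_sigma y))
         - 2/3 * (2 * y * sin_mean h (\<lambda>\<theta>. cos \<theta> powr (4/3)) x (tricomi_sigma y)
             - y^2 * sqrt (-y) * sin_mean h' (\<lambda>\<theta>. sin \<theta> * cos \<theta> powr (4/3)) x (tricomi_sigma y)) = 0"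
proof -
  have "4/3 * integral {-(pi/2)..pi/2} (\<lambda>\<theta>. cos \<theta> powr (4/3)) * h x
        + moment (sin_mean h'' (\<lambda>\<theta>. cos \<theta> powr (4/3)) x) (tricomi_sigma y)
      = 4/3 * sin_mean h (\<lambda>\<theta>. cos \<theta> powr (4/3)) x (tricomi_sigma y)
        + tricomi_sigma y * sin_mean h' (\<lambda>\<theta>. sin \<theta> * cos \<theta> powr (4/3)) x (tricomi_sigma y)"
    using moment_sin_mean_cos_powr[OF h h' h'', of "4/3"] by simp
  moreover have "tricomi_sigma y = - 2/3 * y * sqrt (-y)"
    by (simp add: tricomi_sigma_def)
  ultimately show ?thesis
    by algebra
qed

lemma tricomi_solution_zero_velocity:
  assumes F: "Ck_on 4 F UNIV" and D: "D \<subseteq> UNIV \<times> {..0}"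
  shows "\<exists>v. tricomi_classical_solution x1 x2 F (\<lambda>_. 0) D v"
proof -
  obtain F1 F2 F3 F4 where dF: "\<And>z. (F has_real_derivative F1 z) (at z)"
    "\<And>z. (F1 has_real_derivative F2 z) (at z)" "\<And>z. (F2 has_real_derivative F3 z) (at z)"
    "\<And>z. (F3 has_real_derivative F4 z) (at z)" and cF4: "continuous_on UNIV F4"
    using F by (auto simp: numeral_eq_Suc)
  note cF = dF[THEN DERIV_continuous_on] cF4
  let ?w = "\<lambda>\<theta>. cos \<theta> powr (4/3)"
  let ?M = "\<lambda>g x y. moment (sin_mean g ?w x) (tricomi_sigma y)"
  let ?P = "\<lambda>g x y. sin_mean g ?w x (tricomi_sigma y)"
  let ?Q = "\<lambda>g x y. sin_mean g (\<lambda>\<theta>. sin \<theta> * ?w \<theta>) x (tricomi_sigma y)"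
  define K where "K = 3 / (4 * integral {-(pi/2)..pi/2} ?w)"
  have w: "continuous_on {-(pi/2)..pi/2} ?w" "continuous_on {-(pi/2)..pi/2} (\<lambda>\<theta>. sin \<theta> * ?w \<theta>)"
    by (auto intro!: continuous_intros continuous_on_cos_powr)
  have "tricomi_classical_solution x1 x2 F (\<lambda>_. 0) D (\<lambda>(x, y). F x + K * ?M F2 x y)"
  proof (rule tricomi_classical_solutionI[OF D, where
        ux = "\<lambda>x y. F1 x + K * ?M F3 x y" and uxx = "\<lambda>x y. F2 x + K * ?M F4 x y"
        and uy = "\<lambda>x y. - 2/3 * K * y^2 * ?P F2 x y" and uxy = "\<lambda>x y. - 2/3 * K * y^2 * ?P F3 x y"
        and uyy = "\<lambda>x y. - 2/3 * K * (2 * y * ?P F2 x y - y^2 * sqrt (-y) * ?Q F3 x y)"])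
    show "y * (F2 x + K * ?M F4 x y) + - 2/3 * K * (2 * y * ?P F2 x y - y^2 * sqrt (-y) * ?Q F3 x y) = 0"
      if "y \<le> 0" for x y
    proof -
      have "0 < integral {-(pi/2)..pi/2} ?w"
        by (rule integral_cos_powr_pos) simp
      then have "K * (4/3 * integral {-(pi/2)..pi/2} ?w) = 1"
        by (simp add: K_def)
      then show ?thesis
        using tricomi_equation_zero_velocity[OF dF(3,4) cF4, of y x] by algebra
    qed
  qed (use cF w in \<open>auto intro!: continuous_intros cF[THEN continuous_on_compose2] derivative_eq_intros
      dF DERIV_moment_param DERIV_sin_mean_x DERIV_moment_tricomi_sigma DERIV_sin_mean_tricomi_sigma
      simp: field_simps\<close>)
  then show ?thesis
    by blast
qed

lemma tricomi_equation_zero_position: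
  assumes h: "\<And>z. (h has_real_derivative h' z) (at z)"
    and h': "\<And>z. (h' has_real_derivative h'' z) (at z)" and h'': "continuous_on UNIV h''"
    and y: "y \<le> 0"
  shows "y * (y * sin_mean h' (\<lambda>\<theta>. cos \<theta> powr (2/3)) x (tricomi_sigma y))
         - sqrt (-y) * sin_mean h (\<lambda>\<theta>. sin \<theta> * cos \<theta> powr (2/3)) x (tricomi_sigma y)
         - 2/5 * (3 * y^2 * sin_mean h' (\<lambda>\<theta>. cos \<theta> powr (8/3)) x (tricomi_sigma y)
             - y^3 * sqrt (-y) * sin_mean h'' (\<lambda>\<theta>. sin \<theta> * cos \<theta> powr (8/3)) x (tricomi_sigma y)) = 0"
proof -
  have hc': "continuous_on UNIV h'"
    using h' by (rule DERIV_continuous_on)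
  have "5/3 * sin_mean h (\<lambda>\<theta>. sin \<theta> * cos \<theta> powr (2/3)) x (tricomi_sigma y)
      = tricomi_sigma y * sin_mean h' (\<lambda>\<theta>. cos \<theta> powr (8/3)) x (tricomi_sigma y)"
    using sin_mean_sin_cos_powr[OF h hc', of "2/3"] by simp
  moreover have "tricomi_sigma y * sin_mean h'' (\<lambda>\<theta>. sin \<theta> * cos \<theta> powr (8/3)) x (tricomi_sigma y)
      = 5/3 * sin_mean h' (\<lambda>\<theta>. cos \<theta> powr (2/3)) x (tricomi_sigma y)
        - 8/3 * sin_mean h' (\<lambda>\<theta>. cos \<theta> powr (8/3)) x (tricomi_sigma y)"
    using sin_mean_cos_powr_recurrence[OF h' h'', of "2/3"] by simp
  moreover have "tricomi_sigma y = - 2/3 * y * sqrt (-y)" "sqrt (-y)^2 = - y"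
    using y by (simp_all add: tricomi_sigma_def)
  ultimately show ?thesis
    by algebra
qed

lemma tricomi_solution_zero_position:
  assumes G: "Ck_on 3 G UNIV" and D: "D \<subseteq> UNIV \<times> {..0}"
  shows "\<exists>w. tricomi_classical_solution x1 x2 (\<lambda>_. 0) G D w"
proof -
  obtain G1 G2 G3 where dG: "\<And>z. (G has_real_derivative G1 z) (at z)"
    "\<And>z. (G1 has_real_derivative G2 z) (at z)" "\<And>z. (G2 has_real_derivative G3 z) (at z)"
    and cG3: "continuous_on UNIV G3"
    using G by (auto simp: numeral_eq_Suc)
  note cG = dG[THEN DERIV_continuous_on] cG3
  let ?w = "\<lambda>\<theta>. cos \<theta> powr (2/3)" and ?w' = "\<lambda>\<theta>. cos \<theta> powr (8/3)"
  let ?Q = "\<lambda>g x y. sin_mean g ?w x (tricomi_sigma y)"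
  let ?Qs = "\<lambda>g x y. sin_mean g (\<lambda>\<theta>. sin \<theta> * ?w \<theta>) x (tricomi_sigma y)"
  let ?R = "\<lambda>g x y. sin_mean g ?w' x (tricomi_sigma y)"
  let ?Rs = "\<lambda>g x y. sin_mean g (\<lambda>\<theta>. sin \<theta> * ?w' \<theta>) x (tricomi_sigma y)"
  define c where "c = 1 / integral {-(pi/2)..pi/2} ?w"
  have "0 < integral {-(pi/2)..pi/2} ?w"
    by (rule integral_cos_powr_pos) simp
  then have c: "c * integral {-(pi/2)..pi/2} ?w = 1"
    by (simp add: c_def)
  have w: "continuous_on {-(pi/2)..pi/2} ?w" "continuous_on {-(pi/2)..pi/2} (\<lambda>\<theta>. sin \<theta> * ?w \<theta>)"
    "continuous_on {-(pi/2)..pi/2} ?w'" "continuous_on {-(pi/2)..pi/2} (\<lambda>\<theta>. sin \<theta> * ?w' \<theta>)"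
    by (auto intro!: continuous_intros continuous_on_cos_powr)
  have "tricomi_classical_solution x1 x2 (\<lambda>_. 0) G D (\<lambda>(x, y). c * (y * ?Q G x y))"
  proof (rule tricomi_classical_solutionI[OF D, where
        ux = "\<lambda>x y. c * (y * ?Q G1 x y)" and uxx = "\<lambda>x y. c * (y * ?Q G2 x y)"
        and uy = "\<lambda>x y. c * (?Q G x y - 2/5 * y^3 * ?R G2 x y)"
        and uxy = "\<lambda>x y. c * (?Q G1 x y - 2/5 * y^3 * ?R G3 x y)"
        and uyy = "\<lambda>x y. c * (- sqrt (-y) * ?Qs G1 x y - 2/5 * (3 * y^2 * ?R G2 x y - y^3 * sqrt (-y) * ?Rs G3 x y))"])
    show "y * (c * (y * ?Q G2 x y)) +
        c * (- sqrt (-y) * ?Qs G1 x y - 2/5 * (3 * y^2 * ?R G2 x y - y^3 * sqrt (-y) * ?Rs G3 x y)) = 0"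
      if "y \<le> 0" for x y
      using tricomi_equation_zero_position[OF dG(2,3) cG3 that, of x] by algebra
    show "((\<lambda>y. c * (y * ?Q G x y)) has_real_derivative c * (?Q G x y - 2/5 * y^3 * ?R G2 x y)) (at y within {..0})"
      if "y \<le> 0" for x y
      using DERIV_mult_sin_mean_tricomi_sigma[OF dG(1,2) cG(3) that] by (intro DERIV_cmult)
    show "((\<lambda>y. c * (y * ?Q G1 x y)) has_real_derivative c * (?Q G1 x y - 2/5 * y^3 * ?R G3 x y)) (at y within {..0})"
      if "y \<le> 0" for x y
      using DERIV_mult_sin_mean_tricomi_sigma[OF dG(2,3) cG3 that] by (intro DERIV_cmult)
  qed (use cG w c in \<open>auto intro!: continuous_intros derivative_eq_intros dG DERIV_sin_mean_x
      DERIV_sin_mean_tricomi_sigma simp: field_simps\<close>)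
  then show ?thesis
    by blast
qed

theorem theoremA1:
  fixes x1 x2 :: real and u0 u1 :: "real \<Rightarrow> real"
  assumes "x1 < x2"
    and "Ck_on 4 u0 {x1..x2}"
    and "Ck_on 3 u1 {x1..x2}"
  shows "\<exists>\<delta>::real. 0 < \<delta> \<and> \<delta> \<le> root 3 (9 * (x2 - x1)^2 / 16) \<and>
           (\<exists>u. tricomi_classical_solution x1 x2 u0 u1 (tricomi_region x1 x2 \<delta>) u)"
proof -
  obtain F where F: "Ck_on 4 F UNIV" "\<forall>x\<in>{x1..x2}. F x = u0 x"
    using Ck_on_extend_interval[OF assms(1,2)] by blast
  obtain G where G: "Ck_on 3 G UNIV" "\<forall>x\<in>{x1..x2}. G x = u1 x"
    using Ck_on_extend_interval[OF assms(1,3)] by blast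
  \<comment> \<open>The solution is built in the whole half-plane \<open>y \<le> 0\<close>, so the largest admissible \<open>\<delta>\<close> will do.\<close>
  define \<delta> where "\<delta> = root 3 (9 * (x2 - x1)^2 / 16)"
  have D: "tricomi_region x1 x2 \<delta> \<subseteq> UNIV \<times> {..0}"
    by (auto simp: tricomi_region_def)
  obtain v where v: "tricomi_classical_solution x1 x2 F (\<lambda>_. 0) (tricomi_region x1 x2 \<delta>) v"
    using tricomi_solution_zero_velocity[OF F(1) D] by blast
  obtain w where w: "tricomi_classical_solution x1 x2 (\<lambda>_. 0) G (tricomi_region x1 x2 \<delta>) w"
    using tricomi_solution_zero_position[OF G(1) D] by blast
  have "tricomi_classical_solution x1 x2 u0 u1 (tricomi_region x1 x2 \<delta>) (\<lambda>p. v p + w p)"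
    using F(2) G(2) by (intro tricomi_classical_solution_superposition[OF v w]) auto
  moreover have "0 < \<delta>"
    using assms(1) by (simp add: \<delta>_def)
  ultimately show ?thesis
    unfolding \<delta>_def by blast
qed

end
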